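(* The sequence $(c_n)_{n\ge1}$ satisfies: (a) $c_{2^m+1}=m$ for every $m\ge0$; (b) $c_n<2^{\lceil\log_2 n\rceil}/3$ for every $n\ge1$; (c) $c_n<n/2$ for every $n\ge1$; (d) for every $m\ge1$ and every $p\in\{1,\dots,2^m-1\}$, $c_{2^m+p}=c_{2^{m+1}-p}$.
   Context: Bifurcating trees: rooted trees in which every internal node has exactly two children; $\mathcal{T}_n$ is the set of isomorphism classes of bifurcating trees with $n$ leaves. For a node $w$, $\kappa_T(w)$ is its number of descendant leaves. The Colless index is $\mathcal{C}(T)=\sum_{v}|\kappa_T(v_1)-\kappa_T(v_2)|$, summed over internal nodes $v$ with children $v_1,v_2$; $c_n=\min\{\mathcal{C}(T):T\in\mathcal{T}_n\}$. *)

theory Defs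
  imports Complex_Main
begin

text \<open>Trees are represented as ordered binary trees; isomorphism classes of bifurcating
  trees correspond to these up to swapping children, and the Colless index is
  invariant under such swaps, so minimizing over representatives equals minimizing
  over isomorphism classes.\<close>

datatype btree = Leaf | Node btree btree

fun kappa :: "btree \<Rightarrow> nat" where
  "kappa Leaf = 1"
| "kappa (Node l r) = kappa l + kappa r"

fun colless :: "btree \<Rightarrow> nat" where
  "colless Leaf = 0"
| "colless (Node l r) = colless l + colless r + (if kappa l \<ge> kappa r then kappa l - kappa r else kappa r - kappa l)"

definition min_colless :: "nat \<Rightarrow> nat" where
  "min_colless n = Min (colless ` {t. kappa t = n})"

end

theory Submission
  imports Defs
begin

text \<open>The minimal Colless index \<open>cmin n\<close> obeys the recursion
  \<open>cmin n = cmin \<lceil>n/2\<rceil> + cmin \<lfloor>n/2\<rfloor> + n mod 2\<close> and is attained by the maximally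
  balanced trees. The lower bound is the inequality
  \<open>cmin (a + b) \<le> cmin a + cmin b + |a - b|\<close>, proved by strong induction on \<open>a + b\<close>:
  halving \<open>a\<close> and \<open>b\<close> according to their parities reduces it to instances with smaller
  sums. Properties (a)--(d) are then statements about the recursion alone; (b) comes from
  the sharper bound \<open>cmin n \<le> \<lfloor>2\<^sup>m/3\<rfloor>\<close> for \<open>n \<le> 2\<^sup>m\<close>, whose inductive step
  uses that \<open>2\<^sup>m\<close> is not divisible by 3.\<close>

lemma nat_parity_cases [case_names le_1 even odd]:
  fixes n :: nat
  obtains "n \<le> 1" | k where "n = 2 * k" "k \<ge> 1" | k where "n = 2 * k + 1" "k \<ge> 1"
proof (cases "n \<le> 1")
  case False
  then show thesis using that(2,3) by (cases "even n") (auto elim!: evenE oddE)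
qed simp

fun cmin :: "nat \<Rightarrow> nat" where
  "cmin n = (if n \<le> 1 then 0 else cmin ((n + 1) div 2) + cmin (n div 2) + n mod 2)"

declare cmin.simps [simp del]

lemma cmin_le_1 [simp]: "n \<le> 1 \<Longrightarrow> cmin n = 0"
  by (simp add: cmin.simps)

lemma cmin_double: "cmin (2 * k) = 2 * cmin k"
  by (cases "k = 0") (simp_all add: cmin.simps [of "2 * k"])

lemma cmin_le_2 [simp]: "n \<le> 2 \<Longrightarrow> cmin n = 0"
  using cmin_double [of 1] by (auto simp: le_Suc_eq numeral_2_eq_2)

lemma cmin_odd: "k \<ge> 1 \<Longrightarrow> cmin (2 * k + 1) = cmin k + cmin (k + 1) + 1"
  by (subst cmin.simps) simp

lemma cmin_Suc_lt: "b \<ge> 1 \<Longrightarrow> cmin (b + 1) < cmin b + b"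
proof (induction b rule: less_induct)
  case (less b)
  show ?case
  proof (cases b rule: nat_parity_cases)
    case le_1
    then show ?thesis using less.prems by simp
  next
    case (even k)
    then show ?thesis using less.IH [of k] cmin_odd [of k] cmin_double [of k] by simp
  next
    case (odd k)
    then have "cmin (b + 1) = 2 * cmin (k + 1)" using cmin_double [of "k + 1"] by simp
    then show ?thesis using less.IH [of k] cmin_odd [of k] odd by simp
  qed
qed

abbreviation cmin_split_ineq :: "nat \<Rightarrow> nat \<Rightarrow> bool" where
  "cmin_split_ineq a b \<equiv> int (cmin (a + b)) \<le> int (cmin a) + int (cmin b) + \<bar>int a - int b\<bar>"

lemma cmin_split_ineq_commute: "cmin_split_ineq a b \<longleftrightarrow> cmin_split_ineq b a"
  by (simp add: add.commute abs_minus_commute)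

lemma cmin_split_ineq_le_1: "b \<le> 1 \<Longrightarrow> cmin_split_ineq a b"
  using cmin_Suc_lt [of a] by (cases "a = 0") (auto simp: le_Suc_eq)

lemma cmin_split_ineq_double:
  assumes "cmin_split_ineq x y"
  shows "cmin_split_ineq (2 * x) (2 * y)"
proof -
  have "int (cmin (2 * x + 2 * y)) = 2 * int (cmin (x + y))"
    using cmin_double [of "x + y"] by (simp add: distrib_left)
  also have "\<dots> \<le> 2 * int (cmin x) + 2 * int (cmin y) + 2 * \<bar>int x - int y\<bar>"
    using assms by simp
  also have "\<dots> = int (cmin (2 * x)) + int (cmin (2 * y)) + \<bar>int (2 * x) - int (2 * y)\<bar>"
    by (simp add: cmin_double abs_if)
  finally show ?thesis .
qed

lemma cmin_split_ineq_odd_double: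
  assumes "x \<ge> 1" "y \<ge> 1" "cmin_split_ineq x y" "cmin_split_ineq (x + 1) y"
  shows "cmin_split_ineq (2 * x + 1) (2 * y)"
proof -
  have "int (cmin (2 * x + 1 + 2 * y)) = int (cmin (x + y)) + int (cmin (x + 1 + y)) + 1"
    using cmin_odd [of "x + y"] assms(1) by (simp add: algebra_simps)
  also have "\<dots> \<le> int (cmin x) + int (cmin (x + 1)) + 1 + 2 * int (cmin y)
                    + \<bar>int x - int y\<bar> + \<bar>int (x + 1) - int y\<bar>"
    using assms(3,4) by linarith
  also have "\<dots> = int (cmin (2 * x + 1)) + int (cmin (2 * y)) + \<bar>int (2 * x + 1) - int (2 * y)\<bar>"
    using cmin_odd [OF assms(1)] cmin_double [of y] by (simp add: abs_if)
  finally show ?thesis .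
qed

lemma cmin_split_ineq_odd_odd:
  assumes "x \<ge> 1" "y \<ge> 1" "cmin_split_ineq x (y + 1)" "cmin_split_ineq (x + 1) y"
  shows "cmin_split_ineq (2 * x + 1) (2 * y + 1)"
proof -
  have "int (cmin (2 * x + 1 + (2 * y + 1))) = int (cmin (x + (y + 1))) + int (cmin (x + 1 + y))"
    using cmin_double [of "x + y + 1"] by (simp add: algebra_simps)
  also have "\<dots> \<le> int (cmin x) + int (cmin (x + 1)) + int (cmin y) + int (cmin (y + 1))
                    + \<bar>int x - int (y + 1)\<bar> + \<bar>int (x + 1) - int y\<bar>"
    using assms(3,4) by linarith
  also have "\<dots> \<le> int (cmin (2 * x + 1)) + int (cmin (2 * y + 1)) + \<bar>int (2 * x + 1) - int (2 * y + 1)\<bar>"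
    using cmin_odd [OF assms(1)] cmin_odd [OF assms(2)] by (simp add: abs_if)
  finally show ?thesis .
qed

lemma cmin_split_ineq: "cmin_split_ineq a b"
proof (induction "a + b" arbitrary: a b rule: less_induct)
  case less
  show ?case
  proof (cases "a \<le> 1 \<or> b \<le> 1")
    case True
    \<comment> \<open>\<open>cmin_odd\<close> fails for \<open>k = 0\<close>, so parts of size 1 need \<open>cmin_Suc_lt\<close>\<close>
    then show ?thesis
      using cmin_split_ineq_le_1 cmin_split_ineq_commute by blast
  next
    case False
    consider (even_even) x y where "a = 2 * x" "b = 2 * y"
      | (odd_even) x y where "a = 2 * x + 1" "b = 2 * y"
      | (even_odd) x y where "a = 2 * x" "b = 2 * y + 1"
      | (odd_odd) x y where "a = 2 * x + 1" "b = 2 * y + 1"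
      by (metis evenE oddE)
    then show ?thesis
    proof cases
      case even_even
      then show ?thesis using cmin_split_ineq_double [OF less [of x y]] False by simp
    next
      case odd_even
      then have "x \<ge> 1" "y \<ge> 1" using False by auto
      then show ?thesis
        using cmin_split_ineq_odd_double [OF _ _ less [of x y] less [of "x + 1" y]] odd_even by simp
    next
      case even_odd
      then have "y \<ge> 1" "x \<ge> 1" using False by auto
      then have "cmin_split_ineq b a"
        using cmin_split_ineq_odd_double [OF _ _ less [of y x] less [of "y + 1" x]] even_odd by simp
      then show ?thesis using cmin_split_ineq_commute by blast
    next
      case odd_odd
      then have "x \<ge> 1" "y \<ge> 1" using False by auto
      then show ?thesis
        using cmin_split_ineq_odd_odd [OF _ _ less [of x "y + 1"] less [of "x + 1" y]] odd_odd by simp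
    qed
  qed
qed

lemma kappa_pos: "kappa t \<ge> 1"
  by (induction t) auto

lemma cmin_kappa_le_colless: "cmin (kappa t) \<le> colless t"
proof (induction t)
  case Leaf
  then show ?case by simp
next
  case (Node l r)
  have "int (cmin (kappa l + kappa r)) \<le> int (cmin (kappa l)) + int (cmin (kappa r)) + \<bar>int (kappa l) - int (kappa r)\<bar>"
    by (rule cmin_split_ineq)
  then show ?case using Node by auto
qed

lemma colless_le_square: "colless t \<le> kappa t ^ 2"
proof (induction t)
  case Leaf
  then show ?case by simp
next
  case (Node l r)
  have "colless (Node l r) \<le> kappa l ^ 2 + kappa r ^ 2 + (kappa l + kappa r)"
    using Node by auto
  also have "\<dots> \<le> (kappa l + kappa r) ^ 2"
  proof -
    have "kappa l \<le> kappa l * kappa r" "kappa r \<le> kappa l * kappa r"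
      using kappa_pos [of l] kappa_pos [of r] by simp_all
    then show ?thesis unfolding power2_sum by linarith
  qed
  finally show ?case by simp
qed

fun bal :: "nat \<Rightarrow> btree" where
  "bal n = (if n \<le> 1 then Leaf else Node (bal ((n + 1) div 2)) (bal (n div 2)))"

declare bal.simps [simp del]

lemma kappa_colless_bal: "n \<ge> 1 \<Longrightarrow> kappa (bal n) = n \<and> colless (bal n) = cmin n"
proof (induction n rule: bal.induct)
  case (1 n)
  show ?case
  proof (cases "n \<le> 1")
    case True
    then show ?thesis using "1.prems" by (simp add: bal.simps)
  next
    case False
    then have "(n + 1) div 2 \<ge> 1" "n div 2 \<ge> 1" by auto
    with "1.IH" False have IH:
      "kappa (bal ((n + 1) div 2)) = (n + 1) div 2" "colless (bal ((n + 1) div 2)) = cmin ((n + 1) div 2)"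
      "kappa (bal (n div 2)) = n div 2" "colless (bal (n div 2)) = cmin (n div 2)"
      by simp_all
    have "bal n = Node (bal ((n + 1) div 2)) (bal (n div 2))"
      using False by (subst bal.simps) simp
    moreover have "cmin n = cmin ((n + 1) div 2) + cmin (n div 2) + n mod 2"
      using False by (subst cmin.simps) simp
    moreover have "(n + 1) div 2 + n div 2 = n" "(n + 1) div 2 - n div 2 = n mod 2"
      by presburger+
    ultimately show ?thesis using IH by simp
  qed
qed

lemma min_colless_eq_cmin:
  assumes "n \<ge> 1"
  shows "min_colless n = cmin n"
  unfolding min_colless_def
proof (rule Min_eqI)
  show "finite (colless ` {t. kappa t = n})"
    by (rule finite_subset [of _ "{..n ^ 2}"]) (auto intro: colless_le_square)
  show "cmin n \<le> c" if "c \<in> colless ` {t. kappa t = n}" for c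
    using that cmin_kappa_le_colless by auto
  show "cmin n \<in> colless ` {t. kappa t = n}"
    using kappa_colless_bal [OF assms] by force
qed

lemma cmin_pow2: "cmin (2 ^ m) = 0"
  by (induction m) (simp_all add: cmin_double)

lemma cmin_pow2_Suc: "cmin (2 ^ m + 1) = m"
proof (induction m)
  case 0
  then show ?case by simp
next
  case (Suc m)
  have "cmin (2 * 2 ^ m + 1) = cmin (2 ^ m) + cmin (2 ^ m + 1) + 1"
    by (rule cmin_odd) simp
  then show ?case using Suc cmin_pow2 [of m] by simp
qed

lemma cmin_le_half: "n \<ge> 1 \<Longrightarrow> 2 * cmin n + 2 \<le> n + n mod 2"
proof (induction n rule: less_induct)
  case (less n)
  show ?case
  proof (cases n rule: nat_parity_cases)
    case le_1
    then show ?thesis using less.prems by simp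
  next
    case (even k)
    then show ?thesis using less.IH [of k] by (simp add: cmin_double)
  next
    case (odd k)
    have "k mod 2 + (k + 1) mod 2 = 1" by presburger
    then show ?thesis using less.IH [of k] less.IH [of "k + 1"] cmin_odd [of k] odd by simp
  qed
qed

lemma cmin_mirror: "p \<le> 2 ^ m \<Longrightarrow> cmin (2 ^ m + p) = cmin (2 ^ (m + 1) - p)"
proof (induction m arbitrary: p)
  case 0
  then have "p = 0 \<or> p = 1" by auto
  then show ?case by auto
next
  case (Suc m)
  show ?case
  proof (cases "even p")
    case True
    then obtain q where q: "p = 2 * q" by blast
    have "cmin (2 ^ Suc m + p) = 2 * cmin (2 ^ m + q)"
      using cmin_double [of "2 ^ m + q"] q by simp
    also have "\<dots> = 2 * cmin (2 ^ (m + 1) - q)"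
      using Suc q by simp
    also have "\<dots> = cmin (2 ^ (Suc m + 1) - p)"
      using cmin_double [of "2 ^ (m + 1) - q"] q by (simp add: diff_mult_distrib2)
    finally show ?thesis .
  next
    case False
    then obtain q where q: "p = 2 * q + 1" by (blast elim: oddE)
    with Suc.prems have q_le: "q + 1 \<le> 2 ^ m" by simp
    define r where "r = 2 ^ (m + 1) - (q + 1)"
    have r: "r \<ge> 1" "2 ^ (m + 1) - q = r + 1" "2 ^ (Suc m + 1) - p = 2 * r + 1"
      using q q_le by (simp_all add: r_def)
    have "cmin (2 ^ Suc m + p) = cmin (2 ^ m + q) + cmin (2 ^ m + q + 1) + 1"
      using cmin_odd [of "2 ^ m + q"] q by (simp add: Suc_leI)
    also have "\<dots> = cmin (r + 1) + cmin r + 1"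
      using Suc.IH [of q] Suc.IH [of "q + 1"] q_le r by (simp add: r_def)
    also have "\<dots> = cmin (2 ^ (Suc m + 1) - p)"
      using cmin_odd [OF r(1)] r(3) by simp
    finally show ?thesis .
  qed
qed

lemma not_3_dvd_pow2: "\<not> (3::nat) dvd 2 ^ m"
  by (induction m) (simp_all, presburger)

lemma cmin_le_pow2_div_3: "n \<le> 2 ^ m \<Longrightarrow> cmin n \<le> 2 ^ m div 3"
proof (induction n arbitrary: m rule: less_induct)
  case (less n)
  show ?case
  proof (cases n rule: nat_parity_cases)
    case le_1
    then show ?thesis by simp
  next
    case (even k)
    with less.prems obtain m' where m': "m = Suc m'" "k \<le> 2 ^ m'"
      by (cases m) auto
    have "cmin n = 2 * cmin k" using even by (simp add: cmin_double)
    also have "\<dots> \<le> 2 * (2 ^ m' div 3)" using less.IH [OF _ m'(2)] even by simp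
    also have "\<dots> \<le> 2 ^ m div 3" using m' by simp
    finally show ?thesis .
  next
    case (odd k)
    with less.prems obtain m' where m': "m = m' + 2" "k + 1 \<le> 2 * 2 ^ m'"
      by (cases m; cases "m - 1") auto
    define A :: nat where "A = 2 ^ m'"
    have even_bound: "cmin j \<le> 2 * (A div 3)" if "even j" "j \<le> 2 * A" "j < n" for j
    proof -
      obtain i where "j = 2 * i" using \<open>even j\<close> by blast
      with that less.IH [of i m'] show ?thesis by (simp add: cmin_double A_def)
    qed
    have bound: "cmin j \<le> 2 * A div 3" if "j \<le> 2 * A" "j < n" for j
      using that less.IH [of j "Suc m'"] by (simp add: A_def)
    have "cmin k + cmin (k + 1) \<le> 2 * (A div 3) + 2 * A div 3"
      using even_bound [of k] even_bound [of "k + 1"] bound [of k] bound [of "k + 1"] m' odd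
      by (cases "even k") (simp_all add: A_def)
    moreover have "2 * (A div 3) + 2 * A div 3 + 1 \<le> 4 * A div 3"
      using not_3_dvd_pow2 [of m'] unfolding A_def [symmetric] by presburger
    ultimately show ?thesis
      using cmin_odd [OF odd(2)] odd(1) m'(1) by (simp add: A_def)
  qed
qed

lemma cmin_lt_pow2_div_3: "n \<le> 2 ^ m \<Longrightarrow> 3 * cmin n < 2 ^ m"
  using cmin_le_pow2_div_3 [of n m] not_3_dvd_pow2 [of m] by presburger

lemma le_pow2_ceiling_log: "n \<le> 2 ^ nat \<lceil>log 2 (real n)\<rceil>"
proof -
  have "real n \<le> 2 ^ nat \<lceil>log 2 (real n)\<rceil>"
    by (rule power_of_nat_log_ge) simp
  then show ?thesis
    by (metis of_nat_le_iff of_nat_numeral of_nat_power)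
qed

lemma cmin_less_half: "n \<ge> 1 \<Longrightarrow> 2 * cmin n < n"
  using cmin_le_half [of n] by presburger

theorem corollary5:
  shows "(\<forall>m::nat. min_colless (2 ^ m + 1) = m)
    \<and> (\<forall>n::nat. n \<ge> 1 \<longrightarrow> real (min_colless n) < (2::real) ^ nat \<lceil>log 2 (real n)\<rceil> / 3)
    \<and> (\<forall>n::nat. n \<ge> 1 \<longrightarrow> real (min_colless n) < real n / 2)
    \<and> (\<forall>m p :: nat. m \<ge> 1 \<longrightarrow> 1 \<le> p \<longrightarrow> p \<le> 2 ^ m - 1 \<longrightarrow>
         min_colless (2 ^ m + p) = min_colless (2 ^ (m + 1) - p))"
proof (intro conjI allI impI)
  fix m :: nat
  show "min_colless (2 ^ m + 1) = m"
    using min_colless_eq_cmin [of "2 ^ m + 1"] cmin_pow2_Suc by simp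
next
  fix n :: nat
  assume n: "n \<ge> 1"
  have "real (3 * cmin n) < real (2 ^ nat \<lceil>log 2 (real n)\<rceil>)"
    using cmin_lt_pow2_div_3 [OF le_pow2_ceiling_log] by (simp only: of_nat_less_iff)
  then show "real (min_colless n) < (2::real) ^ nat \<lceil>log 2 (real n)\<rceil> / 3"
    using min_colless_eq_cmin [OF n] by simp
next
  fix n :: nat
  assume n: "n \<ge> 1"
  show "real (min_colless n) < real n / 2"
    using cmin_less_half [OF n] min_colless_eq_cmin [OF n] by simp
next
  fix m p :: nat
  assume "m \<ge> 1" "1 \<le> p" "p \<le> 2 ^ m - 1"
  then show "min_colless (2 ^ m + p) = min_colless (2 ^ (m + 1) - p)"
    using min_colless_eq_cmin cmin_mirror [of p m] by simp
qed

end
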